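(* Let $P\subset\mathbb R^d$ be a full-dimensional polytope which is $\mathbb Z$-$\Delta_d$-free. Then $P$ is inclusion-maximal among $\mathbb Z$-$\Delta_d$-free convex bodies if and only if every facet of $P$ is $\mathbb Z$-$\Delta_d$-locked.
   Context: $\Delta_d=\mathrm{conv}(\mathbf 0,e_1,\dots,e_d)$ is the standard simplex. A $\mathbb Z$-unimodular copy of $X$ is $T(X)$ where $T(x)=Mx+b$, $M\in\mathrm{GL}_d(\mathbb Z)$, $b\in\mathbb Z^d$. A convex set is $\mathbb Z$-$\Delta_d$-free if its relative interior contains no $\mathbb Z$-unimodular copy of $\Delta_d$. A facet $F$ of a full-dimensional polytope $P$ is $\mathbb Z$-$\Delta_d$-locked if there is a $\mathbb Z$-unimodular copy $T$ of $\Delta_d$ with $T\subset P$, $T\cap\mathrm{relint}(F)\neq\emptyset$, and $V(T)\setminus\mathrm{relint}(F)\subset\mathrm{int}(P)$, where $V(T)$ is the vertex set of $T$. *)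

theory Defs
  imports "HOL-Analysis.Analysis"
begin

text \<open>Ambient space R^d is real^'n with d = CARD('n).\<close>

definition std_simplex :: "(real^'n) set" where
  "std_simplex = convex hull (insert 0 (range (\<lambda>i. axis i 1)))"

definition int_vec :: "real^'n \<Rightarrow> bool" where
  "int_vec b \<longleftrightarrow> (\<forall>i. b$i \<in> \<int>)"

definition unimodular_int :: "real^'n^'n \<Rightarrow> bool" where
  "unimodular_int M \<longleftrightarrow> (\<forall>i j. M$i$j \<in> \<int>) \<and> \<bar>det M\<bar> = 1"

definition unimodular_copy :: "(real^'n) set \<Rightarrow> bool" where
  "unimodular_copy T \<longleftrightarrow>
     (\<exists>M b. unimodular_int M \<and> int_vec b \<and> T = (\<lambda>x. M *v x + b) ` std_simplex)"

definition Delta_free :: "(real^'n) set \<Rightarrow> bool" where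
  "Delta_free C \<longleftrightarrow> \<not> (\<exists>T. unimodular_copy T \<and> T \<subseteq> rel_interior C)"

definition Delta_locked :: "(real^'n) set \<Rightarrow> (real^'n) set \<Rightarrow> bool" where
  "Delta_locked P F \<longleftrightarrow>
     (\<exists>T. unimodular_copy T \<and> T \<subseteq> P \<and> T \<inter> rel_interior F \<noteq> {} \<and>
          {v. v extreme_point_of T} - rel_interior F \<subseteq> interior P)"

definition convex_body :: "(real^'n) set \<Rightarrow> bool" where
  "convex_body K \<longleftrightarrow> compact K \<and> convex K \<and> interior K \<noteq> {}"

end

theory Submission
  imports Defs
begin

(* If every facet is locked, take a convex body K properly containing P and a point x of K
   beyond some facet F. Every point of rel int F lies strictly between x and an interior point
   of P, hence in int K; so the copy of the simplex locking F lies in int K and K is not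
   Delta-free.
   Conversely, if a facet F is not locked, push F outward by e > 0 (clipped to a large ball).
   A unimodular copy lying in the interior of every such push lies in P, strictly inside all
   other facet halfspaces, and, P being Delta-free, meets F; it would therefore lock F. Each
   copy thus escapes some push, and since only finitely many copies fit into a bounded set,
   one push is Delta-free, contradicting maximality. *)

lemma interior_halfspaces_le:
  fixes a :: "'i \<Rightarrow> 'a::euclidean_space"
  assumes "finite G" and "\<And>g. g \<in> G \<Longrightarrow> a g \<noteq> 0"
  shows "interior {x. \<forall>g\<in>G. a g \<bullet> x \<le> b g} = {x. \<forall>g\<in>G. a g \<bullet> x < b g}"
  using assms
proof (induction G rule: finite_induct)
  case (insert g G)
  have "{x. \<forall>g'\<in>insert g G. a g' \<bullet> x \<le> b g'} = {x. a g \<bullet> x \<le> b g} \<inter> {x. \<forall>g'\<in>G. a g' \<bullet> x \<le> b g'}"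
    by auto
  with insert show ?case by auto
qed simp

lemma unimodular_copy_eq_convex_hull_int:
  assumes "unimodular_copy (T::(real^'n) set)"
  obtains V where "finite V" "\<forall>v\<in>V. int_vec v" "T = convex hull V"
proof -
  obtain M c where M: "unimodular_int M" and c: "int_vec c" and T: "T = (\<lambda>x. M *v x + c) ` std_simplex"
    using assms unfolding unimodular_copy_def by blast
  define V0 :: "(real^'n) set" where "V0 = insert 0 (range (\<lambda>i. axis i 1))"
  define V where "V = (\<lambda>x. M *v x + c) ` V0"
  have "finite V" unfolding V_def V0_def by simp
  have "T = (\<lambda>x. c + x) ` ((\<lambda>x. M *v x) ` (convex hull V0))"
    by (auto simp: T std_simplex_def V0_def image_image add.commute)
  also have "(\<lambda>x. M *v x) ` (convex hull V0) = convex hull ((\<lambda>x. M *v x) ` V0)"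
    by (rule convex_hull_linear_image) simp
  also have "(\<lambda>x. c + x) ` \<dots> = convex hull ((\<lambda>x. c + x) ` (\<lambda>x. M *v x) ` V0)"
    by (rule convex_hull_translation[symmetric])
  also have "\<dots> = convex hull V"
    by (simp add: V_def image_image add.commute)
  finally have "T = convex hull V" .
  have "(M *v axis i 1) $ j = M $ j $ i" for i j
    by (simp add: matrix_vector_mult_def axis_def if_distrib cong: if_cong)
  then have "\<forall>v\<in>V. int_vec v"
    using M c by (auto simp: V_def V0_def int_vec_def unimodular_int_def)
  with that \<open>finite V\<close> \<open>T = convex hull V\<close> show ?thesis by blast
qed

lemma finite_int_vec_cball: "finite {v::real^'n. int_vec v \<and> norm v \<le> R}"
proof (rule finite_subset)
  let ?C = "{- \<lceil>R\<rceil>..\<lceil>R\<rceil>}"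
  show "finite ((\<lambda>f. \<chi> i. of_int (f i)) ` (UNIV \<rightarrow>\<^sub>E ?C) :: (real^'n) set)"
    by (intro finite_imageI finite_PiE) auto
  show "{v::real^'n. int_vec v \<and> norm v \<le> R} \<subseteq> (\<lambda>f. \<chi> i. of_int (f i)) ` (UNIV \<rightarrow>\<^sub>E ?C)"
  proof (intro subsetI image_eqI)
    fix v :: "real^'n" assume v: "v \<in> {v. int_vec v \<and> norm v \<le> R}"
    then show "v = (\<chi> i. of_int (\<lfloor>v $ i\<rfloor>))"
      by (simp add: vec_eq_iff int_vec_def)
    have "\<bar>v $ i\<bar> \<le> R" for i
      using v component_le_norm_cart[of v i] by simp
    then have "\<lfloor>v $ i\<rfloor> \<in> ?C" for i
    proof -
      have "- of_int \<lceil>R\<rceil> \<le> v $ i" "v $ i < of_int \<lceil>R\<rceil> + 1"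
        using \<open>\<bar>v $ i\<bar> \<le> R\<close> le_of_int_ceiling[of R] by linarith+
      then show ?thesis
        by (simp add: floor_le_iff le_floor_iff)
    qed
    then show "(\<lambda>i. \<lfloor>v $ i\<rfloor>) \<in> UNIV \<rightarrow>\<^sub>E ?C"
      by (simp add: PiE_UNIV_domain)
  qed
qed

lemma finite_unimodular_copies_subset:
  assumes "bounded (S::(real^'n) set)"
  shows "finite {T. unimodular_copy T \<and> T \<subseteq> S}"
proof -
  obtain R where R: "\<And>x. x \<in> S \<Longrightarrow> norm x \<le> R"
    using assms bounded_iff by blast
  have "{T. unimodular_copy T \<and> T \<subseteq> S} \<subseteq> (hull) convex ` Pow {v. int_vec v \<and> norm v \<le> R}"
  proof safe
    fix T assume "unimodular_copy T" "T \<subseteq> S"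
    then obtain V where "\<forall>v\<in>V. int_vec v" "T = convex hull V"
      using unimodular_copy_eq_convex_hull_int by metis
    with \<open>T \<subseteq> S\<close> R hull_subset[of V convex] show "T \<in> (hull) convex ` Pow {v. int_vec v \<and> norm v \<le> R}"
      by blast
  qed
  then show ?thesis
    using finite_int_vec_cball finite_subset by blast
qed

lemma unimodular_copy_subset_interior:
  assumes "unimodular_copy T" "convex K" "{v. v extreme_point_of T} \<subseteq> interior K"
  shows "T \<subseteq> interior K"
proof -
  obtain V where "finite V" "T = convex hull V"
    using assms(1) unimodular_copy_eq_convex_hull_int by metis
  then have "T = convex hull {v. v extreme_point_of T}"
    by (simp add: Krein_Milman_Minkowski finite_imp_compact_convex_hull)
  with assms(2,3) show ?thesis
    by (metis convex_interior hull_minimal)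
qed

lemma Delta_free_in_monotone_family:
  fixes K :: "real \<Rightarrow> (real^'n) set"
  assumes mono: "\<And>e e'. e \<le> e' \<Longrightarrow> K e \<subseteq> K e'"
    and bounded: "bounded (K 1)"
    and interior_ne: "\<And>e. 0 < e \<Longrightarrow> interior (K e) \<noteq> {}"
    and escape: "\<And>T. unimodular_copy T \<Longrightarrow> T \<subseteq> K 1 \<Longrightarrow> \<exists>e>0. \<not> T \<subseteq> interior (K e)"
  obtains e where "0 < e" "Delta_free (K e)"
proof -
  define S where "S = {T. unimodular_copy T \<and> T \<subseteq> K 1}"
  have "\<forall>\<^sub>F e in at_right 0. \<not> T \<subseteq> interior (K e)" if "T \<in> S" for T
  proof -
    obtain e0 where "e0 > 0" "\<not> T \<subseteq> interior (K e0)"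
      using escape[of T] \<open>T \<in> S\<close> by (auto simp: S_def)
    then have "\<not> T \<subseteq> interior (K e)" if "e < e0" for e
      using that mono[of e e0] interior_mono by (metis less_imp_le order_trans)
    with \<open>e0 > 0\<close> show ?thesis
      by (auto simp: eventually_at_right_field)
  qed
  then have "\<forall>\<^sub>F e in at_right 0. 0 < e \<and> e \<le> 1 \<and> (\<forall>T\<in>S. \<not> T \<subseteq> interior (K e))"
    using finite_unimodular_copies_subset[OF bounded]
    by (intro eventually_conj eventually_at_right_less eventually_ball_finite)
       (auto simp: S_def eventually_at_right_field intro: exI[of _ 1])
  then obtain e where e: "0 < e" "e \<le> 1" "\<forall>T\<in>S. \<not> T \<subseteq> interior (K e)"
    using eventually_happens trivial_limit_at_right_real by blast
  have "Delta_free (K e)"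
    unfolding Delta_free_def rel_interior_nonempty_interior[OF interior_ne[OF \<open>0 < e\<close>]]
    using e mono[of e 1] interior_subset by (fastforce simp: S_def)
  with \<open>0 < e\<close> that show ?thesis by blast
qed

lemma open_contains_ray_point:
  fixes v :: "'a::real_normed_vector"
  assumes "open U" "y \<in> U"
  obtains t where "0 < t" "y + t *\<^sub>R v \<in> U"
proof -
  obtain d where "d > 0" "ball y d \<subseteq> U"
    using assms open_contains_ball by blast
  have "norm v + 1 > 0"
    by (simp add: add_nonneg_pos)
  define t where "t = d / (norm v + 1)"
  have "t > 0"
    using \<open>d > 0\<close> \<open>norm v + 1 > 0\<close> by (simp add: t_def)
  have "t * norm v < t * (norm v + 1)"
    using \<open>t > 0\<close> by simp
  also have "\<dots> = d"
    using \<open>norm v + 1 > 0\<close> by (simp add: t_def)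
  finally have "y + t *\<^sub>R v \<in> ball y d"
    using \<open>t > 0\<close> by (simp add: dist_norm)
  with \<open>t > 0\<close> \<open>ball y d \<subseteq> U\<close> that show ?thesis by blast
qed

locale facet_presentation =
  fixes P :: "(real^'n) set" and H :: "(real^'n) set set"
    and a :: "(real^'n) set \<Rightarrow> real^'n" and b :: "(real^'n) set \<Rightarrow> real"
  assumes finite_H: "finite H"
    and P_eq: "P = affine hull P \<inter> \<Inter>H"
    and halfspace: "\<And>h. h \<in> H \<Longrightarrow> a h \<noteq> 0 \<and> h = {x. a h \<bullet> x \<le> b h}"
    and irredundant: "\<And>H'. H' \<subset> H \<Longrightarrow> P \<subset> affine hull P \<inter> \<Inter>H'"
    and full_dim: "affine hull P = UNIV"
begin

abbreviation facet :: "(real^'n) set \<Rightarrow> (real^'n) set" where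
  "facet h \<equiv> P \<inter> {x. a h \<bullet> x = b h}"

lemma P_Inter: "P = \<Inter>H"
  using P_eq full_dim by simp

lemma P_halfspaces: "P = {x. \<forall>h\<in>H. a h \<bullet> x \<le> b h}"
  unfolding P_Inter using halfspace by blast

lemma convex_P: "convex P"
proof -
  have "convex h" if "h \<in> H" for h
    using halfspace[OF that] convex_halfspace_le by metis
  then show ?thesis
    unfolding P_Inter by (rule convex_Inter)
qed

lemma interior_P: "interior P = {x. \<forall>h\<in>H. a h \<bullet> x < b h}"
proof -
  have "a h \<noteq> 0" if "h \<in> H" for h
    using halfspace that by blast
  with finite_H show ?thesis
    by (subst P_halfspaces) (simp add: interior_halfspaces_le)
qed

lemma interior_P_nonempty: "interior P \<noteq> {}"
proof -
  have "P \<noteq> {}"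
    using full_dim affine_hull_empty by (metis UNIV_not_empty)
  then have "rel_interior P \<noteq> {}"
    using convex_P rel_interior_eq_empty by blast
  then show ?thesis
    by (simp add: rel_interior_interior[OF full_dim])
qed

lemma interior_halfspaces_le_except:
  "interior {x. \<forall>h'\<in>H - {h}. a h' \<bullet> x \<le> b h'} = {x. \<forall>h'\<in>H - {h}. a h' \<bullet> x < b h'}"
proof -
  have "a h' \<noteq> 0" if "h' \<in> H - {h}" for h'
    using halfspace that by blast
  with finite_H show ?thesis
    by (intro interior_halfspaces_le[of "H - {h}" a b]) simp_all
qed

lemma open_halfspaces_lt_except: "open {x. \<forall>h'\<in>H - {h}. a h' \<bullet> x < b h'}"
  by (subst interior_halfspaces_le_except[symmetric]) (rule open_interior)

lemma facet_of_iff: "F facet_of P \<longleftrightarrow> (\<exists>h\<in>H. F = facet h)"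
  using facet_of_polyhedron_explicit[OF finite_H P_eq halfspace irredundant] by blast

lemma beyond_facet_point:
  assumes "h \<in> H"
  obtains z where "b h < a h \<bullet> z" "\<forall>h'\<in>H - {h}. a h' \<bullet> z \<le> b h'"
proof -
  have "P \<subset> affine hull P \<inter> \<Inter>(H - {h})"
    using irredundant assms by (metis Diff_disjoint Diff_subset insert_disjoint(2) psubsetI)
  then obtain z where "z \<in> \<Inter>(H - {h})" "z \<notin> P"
    by blast
  moreover have "\<forall>h'\<in>H - {h}. a h' \<bullet> z \<le> b h'"
    using \<open>z \<in> \<Inter>(H - {h})\<close> halfspace by blast
  ultimately have "b h < a h \<bullet> z"
    using P_halfspaces assms by force
  with \<open>\<forall>h'\<in>H - {h}. a h' \<bullet> z \<le> b h'\<close> that show ?thesis by blast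
qed

lemma mem_P_imp_le: "x \<in> P \<Longrightarrow> h \<in> H \<Longrightarrow> a h \<bullet> x \<le> b h"
  using P_halfspaces by blast

lemma mem_P_if_strict_except:
  assumes "h \<in> H" "a h \<bullet> x \<le> b h" "\<forall>h'\<in>H - {h}. a h' \<bullet> x < b h'"
  shows "x \<in> P"
  using assms by (subst P_halfspaces) (force intro: less_imp_le)

lemma mem_interior_P_if_strict_except:
  assumes "h \<in> H" "a h \<bullet> x < b h" "\<forall>h'\<in>H - {h}. a h' \<bullet> x < b h'"
  shows "x \<in> interior P"
  using assms by (subst interior_P) blast

lemma rel_interior_facet_point:
  assumes "h \<in> H"
  obtains u where "a h \<bullet> u = b h" "\<forall>h'\<in>H - {h}. a h' \<bullet> u < b h'"
proof -
  obtain w where w: "\<forall>h'\<in>H. a h' \<bullet> w < b h'"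
    using interior_P_nonempty interior_P by blast
  obtain z where z: "b h < a h \<bullet> z" "\<forall>h'\<in>H - {h}. a h' \<bullet> z \<le> b h'"
    using beyond_facet_point assms by blast
  have wh: "a h \<bullet> w < b h"
    using w assms by blast
  define t where "t = (b h - a h \<bullet> w) / (a h \<bullet> z - a h \<bullet> w)"
  have "0 < t" "t < 1"
    using wh z(1) by (simp_all add: t_def divide_less_eq)
  define u where "u = (1 - t) *\<^sub>R w + t *\<^sub>R z"
  have u_inner: "c \<bullet> u = (1 - t) * (c \<bullet> w) + t * (c \<bullet> z)" for c
    by (simp add: u_def inner_add_right)
  have "a h \<bullet> u = a h \<bullet> w + t * (a h \<bullet> z - a h \<bullet> w)"
    by (simp add: u_inner algebra_simps)
  also have "\<dots> = b h"
    using wh z(1) by (simp add: t_def)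
  finally have "a h \<bullet> u = b h" .
  moreover have "a h' \<bullet> u < b h'" if "h' \<in> H - {h}" for h'
  proof -
    have "(1 - t) * (a h' \<bullet> w) < (1 - t) * b h'"
      using w that \<open>t < 1\<close> by simp
    moreover have "t * (a h' \<bullet> z) \<le> t * b h'"
      using z(2) that \<open>0 < t\<close> by (simp add: mult_left_mono)
    ultimately show ?thesis
      by (simp add: u_inner algebra_simps)
  qed
  ultimately show ?thesis
    using that by blast
qed

lemma mem_rel_interior_facet_iff:
  assumes "h \<in> H"
  shows "y \<in> rel_interior (facet h) \<longleftrightarrow> a h \<bullet> y = b h \<and> (\<forall>h'\<in>H - {h}. a h' \<bullet> y < b h')"
proof
  assume y: "y \<in> rel_interior (facet h)"
  then have "y \<in> facet h"
    using rel_interior_subset by blast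
  moreover have "a h' \<bullet> y < b h'" if h': "h' \<in> H - {h}" for h'
  proof (rule ccontr)
    assume "\<not> a h' \<bullet> y < b h'"
    moreover have P_le: "\<And>x. x \<in> P \<Longrightarrow> a h' \<bullet> x \<le> b h'"
      using h' mem_P_imp_le by blast
    ultimately have "a h' \<bullet> y = b h'"
      using \<open>y \<in> facet h\<close> by (meson IntD1 order_less_le)
    then have "y \<in> facet h'"
      using \<open>y \<in> facet h\<close> by blast
    have "facet h' face_of P"
      by (rule face_of_Int_supporting_hyperplane_le[OF convex_P P_le])
    moreover have "facet h' \<inter> rel_interior (facet h) \<noteq> {}"
      using y \<open>y \<in> facet h'\<close> by blast
    ultimately have "facet h \<subseteq> facet h'"
      by (rule subset_of_face_of[OF _ Int_lower1])
    obtain u where u: "a h \<bullet> u = b h" "\<forall>h'\<in>H - {h}. a h' \<bullet> u < b h'"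
      using rel_interior_facet_point assms by blast
    then have "u \<in> facet h"
      using mem_P_if_strict_except[OF assms] by simp
    with \<open>facet h \<subseteq> facet h'\<close> have "a h' \<bullet> u = b h'"
      by blast
    with bspec[OF u(2) h'] show False
      by simp
  qed
  ultimately show "a h \<bullet> y = b h \<and> (\<forall>h'\<in>H - {h}. a h' \<bullet> y < b h')"
    by blast
next
  assume y: "a h \<bullet> y = b h \<and> (\<forall>h'\<in>H - {h}. a h' \<bullet> y < b h')"
  let ?U = "{x. \<forall>h'\<in>H - {h}. a h' \<bullet> x < b h'}"
  have "affine hull (facet h) \<subseteq> {x. a h \<bullet> x = b h}"
    by (intro hull_minimal) (auto simp: affine_hyperplane)
  then have "?U \<inter> affine hull (facet h) \<subseteq> facet h"
    using mem_P_if_strict_except[OF assms] by fastforce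
  moreover have "y \<in> ?U \<inter> facet h"
    using y mem_P_if_strict_except[OF assms] by simp
  ultimately show "y \<in> rel_interior (facet h)"
    unfolding mem_rel_interior by (intro exI[of _ ?U] conjI open_halfspaces_lt_except)
qed

lemma rel_interior_facet_subset_interior:
  assumes K: "convex K" "P \<subseteq> K" and h: "h \<in> H" and x: "x \<in> K" "b h < a h \<bullet> x"
  shows "rel_interior (facet h) \<subseteq> interior K"
proof
  fix y assume "y \<in> rel_interior (facet h)"
  then have y: "a h \<bullet> y = b h" "\<forall>h'\<in>H - {h}. a h' \<bullet> y < b h'"
    using mem_rel_interior_facet_iff[OF h] by blast+
  obtain t where t: "0 < t" "y + t *\<^sub>R (y - x) \<in> {x. \<forall>h'\<in>H - {h}. a h' \<bullet> x < b h'}"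
    using open_contains_ray_point[OF open_halfspaces_lt_except] y(2) by blast
  let ?p = "y + t *\<^sub>R (y - x)"
  have "a h \<bullet> ?p = b h - t * (a h \<bullet> x - b h)"
    using y(1) by (simp add: inner_add_right inner_diff_right algebra_simps)
  also have "\<dots> < b h"
    using t(1) x(2) by simp
  finally have "?p \<in> interior K"
    using mem_interior_P_if_strict_except[OF h] t(2) interior_mono[OF K(2)] by blast
  moreover have "x - ?p = (1 + t) *\<^sub>R (x - y)"
    by (simp add: algebra_simps)
  then have "y = x - (1 / (1 + t)) *\<^sub>R (x - ?p)"
    using t(1) by simp
  ultimately show "y \<in> interior K"
    using mem_interior_convex_shrink[OF K(1) _ x(1), of ?p "1 / (1 + t)"] t(1) by simp
qed

lemma locked_imp_maximal:
  assumes locked: "\<forall>F. F facet_of P \<longrightarrow> Delta_locked P F"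
    and K: "convex_body K" "Delta_free K" "P \<subseteq> K"
  shows "K = P"
proof (rule ccontr)
  assume "K \<noteq> P"
  then obtain x where x: "x \<in> K" "x \<notin> P"
    using K(3) by blast
  then obtain h where h: "h \<in> H" "b h < a h \<bullet> x"
    using P_halfspaces by (auto simp: not_le)
  obtain T where T: "unimodular_copy T"
    and ext: "{v. v extreme_point_of T} - rel_interior (facet h) \<subseteq> interior P"
    using locked facet_of_iff h(1) unfolding Delta_locked_def by blast
  have "convex K" "interior K \<noteq> {}"
    using K(1) by (auto simp: convex_body_def)
  have "rel_interior (facet h) \<subseteq> interior K"
    by (rule rel_interior_facet_subset_interior[OF \<open>convex K\<close> K(3) h(1) x(1) h(2)])
  moreover have "interior P \<subseteq> interior K"
    using K(3) by (rule interior_mono)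
  ultimately have "T \<subseteq> interior K"
    using ext by (intro unimodular_copy_subset_interior[OF T \<open>convex K\<close>]) blast
  then show False
    using K(2) T rel_interior_nonempty_interior[OF \<open>interior K \<noteq> {}\<close>]
    unfolding Delta_free_def by blast
qed

lemma unimodular_copy_locks_facet:
  assumes "Delta_free P" and h: "h \<in> H" and T: "unimodular_copy T"
    and T_le: "\<And>x. x \<in> T \<Longrightarrow> a h \<bullet> x \<le> b h"
    and T_less: "\<And>x. x \<in> T \<Longrightarrow> \<forall>h'\<in>H - {h}. a h' \<bullet> x < b h'"
  shows "Delta_locked P (facet h)"
proof -
  have "T \<subseteq> P"
    using T_le T_less mem_P_if_strict_except[OF h] by blast
  have in_facet: "x \<in> rel_interior (facet h)" if "x \<in> T" "a h \<bullet> x = b h" for x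
    using that T_less mem_rel_interior_facet_iff[OF h] by blast
  have off_facet: "x \<in> interior P" if "x \<in> T" "a h \<bullet> x \<noteq> b h" for x
    using that T_le[of x] T_less mem_interior_P_if_strict_except[OF h] by force
  have "\<not> T \<subseteq> interior P"
    using assms(1) T rel_interior_interior[OF full_dim] unfolding Delta_free_def by auto
  then have "T \<inter> rel_interior (facet h) \<noteq> {}"
    using in_facet off_facet by blast
  moreover have "{v. v extreme_point_of T} - rel_interior (facet h) \<subseteq> interior P"
    using in_facet off_facet by (auto simp: extreme_point_of_def)
  ultimately show ?thesis
    unfolding Delta_locked_def using \<open>T \<subseteq> P\<close> T by blast
qed

definition facet_push :: "(real^'n) set \<Rightarrow> real \<Rightarrow> real \<Rightarrow> (real^'n) set" where
  "facet_push h R e =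
     cball 0 R \<inter> {x. a h \<bullet> x \<le> b h + e} \<inter> {x. \<forall>h'\<in>H - {h}. a h' \<bullet> x \<le> b h'}"

lemma facet_push_mono: "e \<le> e' \<Longrightarrow> facet_push h R e \<subseteq> facet_push h R e'"
  by (auto simp: facet_push_def)

lemma subset_facet_push:
  assumes "h \<in> H" "P \<subseteq> cball 0 R" "0 \<le> e"
  shows "P \<subseteq> facet_push h R e"
proof
  fix x assume "x \<in> P"
  then have "a h \<bullet> x \<le> b h" "\<forall>h'\<in>H - {h}. a h' \<bullet> x \<le> b h'"
    using assms(1) mem_P_imp_le by blast+
  with \<open>x \<in> P\<close> assms(2,3) show "x \<in> facet_push h R e"
    unfolding facet_push_def by auto
qed

lemma interior_facet_push:
  assumes "h \<in> H"
  shows "interior (facet_push h R e) =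
           ball 0 R \<inter> {x. a h \<bullet> x < b h + e} \<inter> {x. \<forall>h'\<in>H - {h}. a h' \<bullet> x < b h'}"
proof -
  have "a h \<noteq> 0"
    using halfspace assms by blast
  then show ?thesis
    unfolding facet_push_def interior_Int by (simp add: interior_halfspaces_le_except)
qed

lemma convex_body_facet_push:
  assumes "h \<in> H" "P \<subseteq> cball 0 R" "0 \<le> e"
  shows "convex_body (facet_push h R e)"
proof -
  have "closed {x. \<forall>h'\<in>H - {h}. a h' \<bullet> x \<le> b h'}"
    unfolding Collect_ball_eq by (intro closed_INT ballI closed_halfspace_le)
  moreover have "convex {x. \<forall>h'\<in>H - {h}. a h' \<bullet> x \<le> b h'}"
    unfolding Collect_ball_eq by (intro convex_INT ballI convex_halfspace_le)
  ultimately have "compact (facet_push h R e) \<and> convex (facet_push h R e)"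
    unfolding facet_push_def
    by (simp add: compact_Int_closed closed_halfspace_le convex_Int convex_halfspace_le)
  moreover have "interior (facet_push h R e) \<noteq> {}"
    using interior_mono[OF subset_facet_push[OF assms]] interior_P_nonempty by blast
  ultimately show ?thesis
    by (simp add: convex_body_def)
qed

lemma facet_push_escape:
  assumes "Delta_free P" "h \<in> H" "\<not> Delta_locked P (facet h)" "unimodular_copy T"
  shows "\<exists>e>0. \<not> T \<subseteq> interior (facet_push h R e)"
proof (rule ccontr)
  assume "\<not> ?thesis"
  then have inside: "\<And>e. 0 < e \<Longrightarrow> T \<subseteq> interior (facet_push h R e)"
    by blast
  have "a h \<bullet> x \<le> b h" if "x \<in> T" for x
  proof (rule field_le_epsilon)
    fix e :: real assume "0 < e"
    then show "a h \<bullet> x \<le> b h + e"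
      using inside[of e] that interior_facet_push[OF assms(2)] by fastforce
  qed
  moreover have "\<forall>h'\<in>H - {h}. a h' \<bullet> x < b h'" if "x \<in> T" for x
    using inside[of 1] that interior_facet_push[OF assms(2)] by fastforce
  ultimately have "Delta_locked P (facet h)"
    using unimodular_copy_locks_facet[OF assms(1,2,4)] by blast
  with assms(3) show False ..
qed

lemma maximal_imp_locked:
  assumes "bounded P" "Delta_free P"
    and maximal: "\<forall>K. convex_body K \<and> Delta_free K \<and> P \<subseteq> K \<longrightarrow> K = P"
    and h: "h \<in> H"
  shows "Delta_locked P (facet h)"
proof (rule ccontr)
  assume not_locked: "\<not> Delta_locked P (facet h)"
  obtain R where R: "P \<subseteq> ball 0 R"
    using \<open>bounded P\<close> bounded_subset_ballD by blast
  then have P_cball: "P \<subseteq> cball 0 R"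
    by auto
  obtain e where "0 < e" "Delta_free (facet_push h R e)"
  proof (rule Delta_free_in_monotone_family)
    show "bounded (facet_push h R 1)"
      by (auto simp: facet_push_def intro: bounded_subset[OF bounded_cball])
    show "interior (facet_push h R e) \<noteq> {}" if "0 < e" for e
      using convex_body_facet_push[OF h P_cball] that by (simp add: convex_body_def)
    show "\<exists>e>0. \<not> T \<subseteq> interior (facet_push h R e)" if "unimodular_copy T" for T
      by (rule facet_push_escape[OF \<open>Delta_free P\<close> h not_locked that])
  qed (auto dest: facet_push_mono)
  then have "facet_push h R e = P"
    using maximal convex_body_facet_push[OF h P_cball] subset_facet_push[OF h P_cball] by simp
  obtain u where u: "a h \<bullet> u = b h" "\<forall>h'\<in>H - {h}. a h' \<bullet> u < b h'"
    using rel_interior_facet_point h by blast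
  then have "u \<in> P"
    using mem_P_if_strict_except[OF h] by simp
  with R u \<open>0 < e\<close> have "u \<in> interior (facet_push h R e)"
    by (auto simp: interior_facet_push[OF h])
  moreover have "u \<notin> interior P"
    using u(1) h by (simp add: interior_P) (metis less_irrefl)
  ultimately show False
    using \<open>facet_push h R e = P\<close> by simp
qed

end

lemma polyhedron_obtains_facet_presentation:
  assumes "polyhedron P" "affine hull P = UNIV"
  obtains H a b where "facet_presentation P H a b"
proof -
  obtain H where H: "finite H" "P = affine hull P \<inter> \<Inter>H"
      "\<forall>h\<in>H. \<exists>a b. a \<noteq> 0 \<and> h = {x. a \<bullet> x \<le> b}"
      "\<forall>H'. H' \<subset> H \<longrightarrow> P \<subset> affine hull P \<inter> \<Inter>H'"
    using assms(1) unfolding polyhedron_Int_affine_minimal by blast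
  then obtain a b where "\<forall>h\<in>H. a h \<noteq> 0 \<and> h = {x. a h \<bullet> x \<le> b h}"
    by metis
  with H assms(2) show ?thesis
    by (intro that[of H a b] facet_presentation.intro) auto
qed

theorem proposition4p2:
  fixes P :: "(real^'n) set"
  assumes "polytope P"
    and "aff_dim P = int CARD('n)"
    and "Delta_free P"
  shows "(\<forall>K. convex_body K \<and> Delta_free K \<and> P \<subseteq> K \<longrightarrow> K = P)
         \<longleftrightarrow> (\<forall>F. F facet_of P \<longrightarrow> Delta_locked P F)"
proof -
  have "affine hull P = UNIV"
    using assms(2) aff_dim_eq_full[of P] by simp
  then obtain H a b where "facet_presentation P H a b"
    by (rule polyhedron_obtains_facet_presentation[OF polytope_imp_polyhedron[OF assms(1)]])
  then interpret facet_presentation P H a b .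
  show ?thesis
  proof (intro iffI allI impI)
    fix F assume maximal: "\<forall>K. convex_body K \<and> Delta_free K \<and> P \<subseteq> K \<longrightarrow> K = P"
      and "F facet_of P"
    then obtain h where "h \<in> H" "F = facet h"
      using facet_of_iff by blast
    then show "Delta_locked P F"
      using maximal_imp_locked[OF polytope_imp_bounded[OF assms(1)] assms(3) maximal] by simp
  next
    fix K assume "\<forall>F. F facet_of P \<longrightarrow> Delta_locked P F"
      and "convex_body K \<and> Delta_free K \<and> P \<subseteq> K"
    then show "K = P"
      using locked_imp_maximal by blast
  qed
qed

end
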